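(* Every nonempty open subset $U\subset \mathbb{R}^{\mathbb{N}}$ satisfies $\mu(U)=\infty$.
   Context: $\mathbb{R}^{\mathbb{N}}$ carries the product topology. Let $\mathcal{B}$ be the Borel $\sigma$-algebra of $\mathbb{R}$, $\lambda$ the Lebesgue measure, and $\mathcal{B}_{\infty}$ the $\sigma$-algebra on $\mathbb{R}^{\mathbb{N}}$ generated by the cylinder sets $\prod_{i=1}^{m}C_{i}\times\prod_{i=m+1}^{\infty}\mathbb{R}$ with $C_i\in\mathcal{B}$, $m\in\mathbb{N}$ (equal to the Borel $\sigma$-algebra of the product topology). Let $\mathcal{F}(\mathcal{B},\lambda)$ be the set of finite rectangles $\prod_{i\in\mathbb{N}}C_{i}$ with $C_i\in\mathcal{B}$ and $\prod_{i}\lambda(C_i)\in[0,\infty)$, with $\mathrm{vol}(\prod_{i}C_i):=\prod_i\lambda(C_i)$. The measure $\mu$ is the restriction to $\mathcal{B}_{\infty}$ of the outer measure $\mu^{\ast}(A):=\inf\{\sum_{n}\mathrm{vol}(\mathscr{C}_{n}) : \mathscr{C}_{n}\in\mathcal{F}(\mathcal{B},\lambda),\ A\subset\bigcup_{n}\mathscr{C}_{n}\}$ ($\inf\varnothing=\infty$). *)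

theory Defs
  imports "HOL-Analysis.Analysis"
begin

text \<open>A point of R^N is a function nat => real; the type nat => real carries the
product topology (instance in HOL-Analysis Function_Topology).\<close>

definition rect :: "(nat \<Rightarrow> real set) \<Rightarrow> (nat \<Rightarrow> real) set" where
  "rect C = {x. \<forall>i. x i \<in> C i}"

text \<open>Infinite product of the Lebesgue measures of the factors, as the limit of
the partial products (in [0,infinity], with 0 * infinity = 0).\<close>
definition vol :: "(nat \<Rightarrow> real set) \<Rightarrow> ennreal" where
  "vol C = lim (\<lambda>n. \<Prod>i<n. emeasure lborel (C i))"

definition fin_rect :: "(nat \<Rightarrow> real set) \<Rightarrow> bool" where
  "fin_rect C \<longleftrightarrow> (\<forall>i. C i \<in> sets borel) \<and>
     (\<exists>v. v < top \<and> ((\<lambda>n. \<Prod>i<n. emeasure lborel (C i)) \<longlongrightarrow> v) sequentially)"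

text \<open>The outer measure mu* (Inf of the empty set is top).\<close>
definition mu_star :: "(nat \<Rightarrow> real) set \<Rightarrow> ennreal" where
  "mu_star A = (INF R \<in> {R :: nat \<Rightarrow> nat \<Rightarrow> real set.
        (\<forall>n. fin_rect (R n)) \<and> A \<subseteq> (\<Union>n. rect (R n))}. (\<Sum>n. vol (R n)))"

definition cylinders :: "(nat \<Rightarrow> real) set set" where
  "cylinders = {rect (\<lambda>i. if i < m then C i else UNIV) | C m.
                  (\<forall>i. C i \<in> sets borel)}"

definition B_inf :: "(nat \<Rightarrow> real) set set" where
  "B_inf = sigma_sets UNIV cylinders"

definition mu :: "(nat \<Rightarrow> real) set \<Rightarrow> ennreal" where
  "mu A = (if A \<in> B_inf then mu_star A else undefined)"

end

theory Submission
  imports Defs "HOL-Probability.Probability"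
begin

text \<open>An open set U contains a box \<Prod>i. [x i - e i, x i + e i] with e i = 1 for almost all i.
Let P be the product of the uniform probability distributions on these intervals. Then P gives
the box measure 1, whereas for a finite rectangle C the first k factors give
P(C) \<le> (\<Prod>i<k. \<lambda>(C i)) (\<Prod>i<k. 1 / (2 e i)), which tends to vol C \<cdot> 0 = 0 because the second
product is eventually halved at every step. Hence U cannot be covered by countably many finite
rectangles, and \<mu>*(U) is the infimum of the empty set.\<close>

lemma sets_borel_subset_B_inf: "sets (borel :: (nat \<Rightarrow> real) measure) \<subseteq> B_inf"
proof -
  have "sets (borel :: (nat \<Rightarrow> real) measure) = sets (Pi\<^sub>M UNIV (\<lambda>i::nat. borel :: real measure))"
    by (rule sets_PiM_equal_borel[symmetric])
  also have "\<dots> = sigma_sets UNIV {{f :: nat \<Rightarrow> real. f i \<in> A} | i A. A \<in> sets borel}"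
    unfolding sets_PiM_single by simp
  also have "\<dots> \<subseteq> B_inf"
    unfolding B_inf_def
  proof (rule sigma_sets_mono', safe)
    fix i :: nat and A :: "real set"
    assume "A \<in> sets borel"
    define C :: "nat \<Rightarrow> real set" where "C j = (if j = i then A else UNIV)" for j
    have "{f. f i \<in> A} = rect (\<lambda>j. if j < Suc i then C j else UNIV)"
      unfolding rect_def C_def by auto
    moreover have "\<forall>j. C j \<in> sets borel" using \<open>A \<in> sets borel\<close> by (simp add: C_def)
    ultimately show "{f. f i \<in> A} \<in> cylinders"
      unfolding cylinders_def by blast
  qed
  finally show ?thesis .
qed

lemma open_contains_rect_Icc:
  fixes U :: "(nat \<Rightarrow> real) set"
  assumes "open U" and "x \<in> U"
  obtains e N where "\<And>i. 0 < e i" and "\<And>i. N \<le> i \<Longrightarrow> e i = 1"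
    and "rect (\<lambda>i. {x i - e i .. x i + e i}) \<subseteq> U"
proof -
  have "openin (product_topology (\<lambda>i. euclidean) UNIV) U"
    using assms(1) open_fun_def by auto
  from product_topology_open_contains_basis[OF this assms(2)] obtain X where
    X: "x \<in> Pi\<^sub>E UNIV X" "\<And>i. open (X i)" "finite {i. X i \<noteq> UNIV}" "Pi\<^sub>E UNIV X \<subseteq> U"
    by auto
  obtain N where N: "\<And>i. X i \<noteq> UNIV \<Longrightarrow> i < N"
    using finite_nat_bounded[OF X(3)] by auto
  have "\<exists>d>0. cball (x i) d \<subseteq> X i" for i
    using X(1) X(2)[of i] open_contains_cball[of "X i"] by (auto simp: PiE_iff)
  then obtain d where d: "\<And>i. 0 < d i" "\<And>i. cball (x i) (d i) \<subseteq> X i"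
    by metis
  define e where "e i = (if i < N then d i else 1)" for i
  have "{x i - e i .. x i + e i} \<subseteq> X i" for i
  proof (cases "i < N")
    case True
    then show ?thesis using d(2)[of i] by (simp add: e_def cball_eq_atLeastAtMost)
  next
    case False
    then show ?thesis using N by fastforce
  qed
  then have "rect (\<lambda>i. {x i - e i .. x i + e i}) \<subseteq> Pi\<^sub>E UNIV X"
    unfolding rect_def PiE_UNIV_domain Pi_def by blast
  with X(4) have "rect (\<lambda>i. {x i - e i .. x i + e i}) \<subseteq> U" by blast
  moreover have "0 < e i" for i using d(1) by (simp add: e_def)
  ultimately show thesis using that[of e N] by (simp add: e_def)
qed

lemma prod_lessThan_tendsto_zero:
  fixes c :: "nat \<Rightarrow> real"
  assumes "\<And>i. N \<le> i \<Longrightarrow> c i = q" and "\<bar>q\<bar> < 1"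
  shows "(\<lambda>k. \<Prod>i<k. c i) \<longlonglongrightarrow> 0"
proof (rule LIMSEQ_offset[where k = N])
  have "(\<Prod>i<j + N. c i) = (\<Prod>i<N. c i) * q ^ j" for j
    by (induction j) (simp_all add: assms(1) add.commute)
  then show "(\<lambda>j. \<Prod>i<j + N. c i) \<longlonglongrightarrow> 0"
    using assms(2) by (simp add: LIMSEQ_abs_realpow_zero2 tendsto_mult_right_zero)
qed

lemma rect_eq_INT_prod_emb:
  assumes "\<And>i. space (M i) = UNIV"
  shows "rect C = (\<Inter>k. prod_emb UNIV M {..<k} (Pi\<^sub>E {..<k} C))"
  using assms by (auto simp: rect_def prod_emb_def PiE_iff) (metis lessI lessThan_iff)

lemma rect_in_sets_PiM:
  assumes "\<And>i. space (M i) = UNIV" and "\<And>i. C i \<in> sets (M i)"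
  shows "rect C \<in> sets (Pi\<^sub>M UNIV M)"
  using assms(2) by (subst rect_eq_INT_prod_emb[of M, OF assms(1)])
    (auto intro!: sets.countable_INT sets_PiM_I)

lemma emeasure_PiM_rect:
  assumes "\<And>i. prob_space (M i)" and "\<And>i. space (M i) = UNIV" and "\<And>i. C i \<in> sets (M i)"
  shows "(\<lambda>k. \<Prod>i<k. emeasure (M i) (C i)) \<longlonglongrightarrow> emeasure (Pi\<^sub>M UNIV M) (rect C)"
proof -
  interpret P: prob_space "Pi\<^sub>M UNIV M" using assms(1) by (rule prob_space_PiM)
  define E where "E k = prod_emb UNIV M {..<k} (Pi\<^sub>E {..<k} C)" for k
  have "emeasure (Pi\<^sub>M UNIV M) (E k) = (\<Prod>i<k. emeasure (M i) (C i))" for k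
    unfolding E_def using assms(1,3) by (intro emeasure_PiM_emb) auto
  moreover have "(\<lambda>k. emeasure (Pi\<^sub>M UNIV M) (E k)) \<longlonglongrightarrow> emeasure (Pi\<^sub>M UNIV M) (\<Inter>k. E k)"
  proof (rule Lim_emeasure_decseq)
    show "range E \<subseteq> sets (Pi\<^sub>M UNIV M)"
      unfolding E_def using assms(3) by (auto intro!: sets_PiM_I)
    show "decseq E"
      unfolding E_def decseq_def using assms(2) by (auto simp: prod_emb_def PiE_iff)
  qed (simp add: P.emeasure_eq_measure)
  ultimately show ?thesis
    unfolding E_def rect_eq_INT_prod_emb[OF assms(2), symmetric] by simp
qed

lemma fin_rect_null_PiM:
  fixes M :: "nat \<Rightarrow> real measure" and c :: "nat \<Rightarrow> real"
  assumes prob: "\<And>i. prob_space (M i)" and sets_M: "\<And>i. sets (M i) = sets borel"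
    and density: "\<And>i B. B \<in> sets borel \<Longrightarrow> emeasure (M i) B \<le> emeasure lborel B * ennreal (c i)"
    and c_nonneg: "\<And>i. 0 \<le> c i" and c_prod: "(\<lambda>k. \<Prod>i<k. c i) \<longlonglongrightarrow> 0"
    and "fin_rect C"
  shows "rect C \<in> null_sets (Pi\<^sub>M UNIV M)"
proof -
  obtain v where C: "\<And>i. C i \<in> sets borel" and "v < top"
    and v: "(\<lambda>k. \<Prod>i<k. emeasure lborel (C i)) \<longlonglongrightarrow> v"
    using \<open>fin_rect C\<close> unfolding fin_rect_def by blast
  have space_M: "space (M i) = UNIV" for i
    using sets_eq_imp_space_eq[OF sets_M[of i]] by simp
  have "(\<lambda>k. ennreal (\<Prod>i<k. c i)) \<longlonglongrightarrow> 0"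
    using tendsto_ennrealI[OF c_prod] by simp
  with v \<open>v < top\<close> have bound_lim:
    "(\<lambda>k. (\<Prod>i<k. emeasure lborel (C i)) * ennreal (\<Prod>i<k. c i)) \<longlonglongrightarrow> v * 0"
    by (intro tendsto_mult_ennreal) auto
  have "(\<Prod>i<k. emeasure (M i) (C i)) \<le> (\<Prod>i<k. emeasure lborel (C i)) * ennreal (\<Prod>i<k. c i)"
    for k
  proof -
    have "(\<Prod>i<k. emeasure (M i) (C i)) \<le> (\<Prod>i<k. emeasure lborel (C i) * ennreal (c i))"
      by (intro prod_mono_ennreal density C)
    also have "\<dots> = (\<Prod>i<k. emeasure lborel (C i)) * ennreal (\<Prod>i<k. c i)"
      using c_nonneg by (simp add: prod.distrib prod_ennreal)
    finally show ?thesis .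
  qed
  then have "emeasure (Pi\<^sub>M UNIV M) (rect C) \<le> v * 0"
    using LIMSEQ_le[OF emeasure_PiM_rect[OF prob space_M] bound_lim] C sets_M by auto
  moreover have "rect C \<in> sets (Pi\<^sub>M UNIV M)"
    using rect_in_sets_PiM[OF space_M] C sets_M by auto
  ultimately show ?thesis by (simp add: null_sets_def)
qed

lemma emeasure_uniform_measure_le:
  assumes "A \<in> sets M" and "B \<in> sets M"
  shows "emeasure (uniform_measure M A) B \<le> emeasure M B / emeasure M A"
  using assms by (simp add: divide_right_mono_ennreal emeasure_mono)

definition uniform_box_measure :: "(nat \<Rightarrow> real) \<Rightarrow> (nat \<Rightarrow> real) \<Rightarrow> (nat \<Rightarrow> real) measure" where
  "uniform_box_measure x e = (\<Pi>\<^sub>M i\<in>UNIV. uniform_measure lborel {x i - e i .. x i + e i})"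

lemma prob_space_uniform_measure_Icc:
  fixes a e :: real
  assumes "0 < e"
  shows "prob_space (uniform_measure lborel {a - e .. a + e})"
  using assms by (intro prob_space_uniform_measure) (simp_all add: emeasure_lborel_Icc)

lemma emeasure_uniform_box_measure_box:
  assumes "\<And>i. 0 < e i"
  shows "emeasure (uniform_box_measure x e) (rect (\<lambda>i. {x i - e i .. x i + e i})) = 1"
proof -
  let ?I = "\<lambda>i. {x i - e i .. x i + e i}"
  let ?M = "\<lambda>i. uniform_measure lborel (?I i)"
  have factor: "emeasure (?M i) (?I i) = 1" for i
    using assms[of i] by (intro emeasure_uniform_measure_1) (simp_all add: emeasure_lborel_Icc)
  have "(\<lambda>k. \<Prod>i<k. emeasure (?M i) (?I i)) \<longlonglongrightarrow> emeasure (uniform_box_measure x e) (rect ?I)"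
    unfolding uniform_box_measure_def
    by (rule emeasure_PiM_rect) (simp_all add: prob_space_uniform_measure_Icc assms)
  then have "(\<lambda>k. 1) \<longlonglongrightarrow> emeasure (uniform_box_measure x e) (rect ?I)"
    unfolding factor prod.neutral_const .
  then show ?thesis
    using LIMSEQ_unique tendsto_const by metis
qed

lemma fin_rect_null_uniform_box_measure:
  assumes e_pos: "\<And>i. 0 < e i" and e_tail: "\<And>i. N \<le> i \<Longrightarrow> e i = 1" and "fin_rect C"
  shows "rect C \<in> null_sets (uniform_box_measure x e)"
  unfolding uniform_box_measure_def
proof (rule fin_rect_null_PiM[where c = "\<lambda>i. 1 / (2 * e i)"])
  show "prob_space (uniform_measure lborel {x i - e i .. x i + e i})" for i
    using e_pos by (rule prob_space_uniform_measure_Icc)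
  show "emeasure (uniform_measure lborel {x i - e i .. x i + e i}) B
      \<le> emeasure lborel B * ennreal (1 / (2 * e i))" if "B \<in> sets borel" for i B
  proof -
    have "emeasure (uniform_measure lborel {x i - e i .. x i + e i}) B
        \<le> emeasure lborel B / emeasure lborel {x i - e i .. x i + e i}"
      using that by (intro emeasure_uniform_measure_le) simp_all
    also have "\<dots> = emeasure lborel B * ennreal (1 / (2 * e i))"
      using e_pos[of i]
      by (simp add: emeasure_lborel_Icc divide_ennreal_def inverse_ennreal inverse_eq_divide)
    finally show ?thesis .
  qed
  show "(\<lambda>k. \<Prod>i<k. 1 / (2 * e i)) \<longlonglongrightarrow> 0"
    by (rule prod_lessThan_tendsto_zero[where N = N and q = "1 / 2"]) (simp_all add: e_tail)
  show "0 \<le> 1 / (2 * e i)" for i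
    using e_pos[of i] by simp
qed (simp_all add: \<open>fin_rect C\<close>)

lemma open_not_covered_by_fin_rects:
  fixes U :: "(nat \<Rightarrow> real) set" and R :: "nat \<Rightarrow> nat \<Rightarrow> real set"
  assumes "open U" and "U \<noteq> {}" and "\<And>n. fin_rect (R n)"
  shows "\<not> U \<subseteq> (\<Union>n. rect (R n))"
proof
  assume cover: "U \<subseteq> (\<Union>n. rect (R n))"
  obtain x where "x \<in> U" using assms(2) by blast
  then obtain e N where e_pos: "\<And>i. 0 < e i" and e_tail: "\<And>i. N \<le> i \<Longrightarrow> e i = 1"
    and box: "rect (\<lambda>i. {x i - e i .. x i + e i}) \<subseteq> U"
    using open_contains_rect_Icc[OF assms(1)] by blast
  have null: "(\<Union>n. rect (R n)) \<in> null_sets (uniform_box_measure x e)"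
    using fin_rect_null_uniform_box_measure[OF e_pos e_tail assms(3)] by (rule null_sets_UN)
  have "1 = emeasure (uniform_box_measure x e) (rect (\<lambda>i. {x i - e i .. x i + e i}))"
    using emeasure_uniform_box_measure_box[OF e_pos] by simp
  also have "\<dots> \<le> emeasure (uniform_box_measure x e) (\<Union>n. rect (R n))"
    using null by (intro emeasure_mono[OF order_trans[OF box cover]]) auto
  also have "\<dots> = 0"
    using null by auto
  finally show False by simp
qed

theorem theoremA7:
  fixes U :: "(nat \<Rightarrow> real) set"
  assumes "open U" and "U \<noteq> {}"
  shows "mu U = top"
proof -
  have "U \<in> B_inf"
    using borel_open[OF assms(1)] sets_borel_subset_B_inf by blast
  moreover have
    "{R :: nat \<Rightarrow> nat \<Rightarrow> real set. (\<forall>n. fin_rect (R n)) \<and> U \<subseteq> (\<Union>n. rect (R n))} = {}"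
    using open_not_covered_by_fin_rects[OF assms] by blast
  then have "mu_star U = top"
    unfolding mu_star_def by (simp only: INF_empty)
  ultimately show ?thesis unfolding mu_def by simp
qed

end
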